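(* Let $\|\cdot\|$ be a norm on $\mathbb{R}^n$ and let $F:\mathbb{R}^n\to\mathbb{R}^n$ be continuous and strongly monotone with respect to $\|\cdot\|$. Then the set $\{x\in\mathbb{R}^n: F(x)=0\}$ consists of exactly one point.
   Context: A weak pairing (WP) on $\mathbb{R}^n$ is a map $[\![\cdot,\cdot]\!]:\mathbb{R}^n\times\mathbb{R}^n\to\mathbb{R}$ that is subadditive and continuous in its first argument, satisfies $[\![\alpha x,y]\!]=[\![x,\alpha y]\!]=\alpha[\![x,y]\!]$ for $\alpha\ge0$ and $[\![-x,-y]\!]=[\![x,y]\!]$, $[\![x,x]\!]>0$ for $x\ne0$, and $|[\![x,y]\!]|\le[\![x,x]\!]^{1/2}[\![y,y]\!]^{1/2}$; it is compatible with a norm if $[\![x,x]\!]=\|x\|^2$. WPs are assumed to also satisfy Deimling's inequality $[\![x,y]\!]\le\|y\|\lim_{h\to0^+}h^{-1}(\|y+hx\|-\|y\|)$ and the curve norm derivative formula ($\|x(t)\|D^+\|x(t)\|=[\![\dot x(t),x(t)]\!]$ a.e. for differentiable curves). $F$ is strongly monotone w.r.t. $\|\cdot\|$ if for some $c>0$ and some compatible WP, $-[\![-(F(x)-F(y)),x-y]\!]\ge c\|x-y\|^2$ for all $x,y$. *)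

theory Defs
  imports "HOL-Analysis.Analysis"
begin

definition is_norm :: "(real ^ 'n \<Rightarrow> real) \<Rightarrow> bool" where
  "is_norm N \<longleftrightarrow>
     (\<forall>x. 0 \<le> N x) \<and> (\<forall>x. N x = 0 \<longleftrightarrow> x = 0) \<and>
     (\<forall>c x. N (c *\<^sub>R x) = \<bar>c\<bar> * N x) \<and>
     (\<forall>x y. N (x + y) \<le> N x + N y)"

definition weak_pairing :: "(real ^ 'n \<Rightarrow> real ^ 'n \<Rightarrow> real) \<Rightarrow> bool" where
  "weak_pairing WP \<longleftrightarrow>
     (\<forall>x1 x2 y. WP (x1 + x2) y \<le> WP x1 y + WP x2 y) \<and>
     (\<forall>y. continuous_on UNIV (\<lambda>x. WP x y)) \<and>
     (\<forall>a x y. a \<ge> 0 \<longrightarrow> WP (a *\<^sub>R x) y = a * WP x y \<and> WP x (a *\<^sub>R y) = a * WP x y) \<and>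
     (\<forall>x y. WP (- x) (- y) = WP x y) \<and>
     (\<forall>x. x \<noteq> 0 \<longrightarrow> WP x x > 0) \<and>
     (\<forall>x y. \<bar>WP x y\<bar> \<le> sqrt (WP x x) * sqrt (WP y y))"

definition wp_compatible ::
  "(real ^ 'n \<Rightarrow> real ^ 'n \<Rightarrow> real) \<Rightarrow> (real ^ 'n \<Rightarrow> real) \<Rightarrow> bool" where
  "wp_compatible WP N \<longleftrightarrow> (\<forall>x. WP x x = (N x)\<^sup>2)"

definition deimling_ineq ::
  "(real ^ 'n \<Rightarrow> real ^ 'n \<Rightarrow> real) \<Rightarrow> (real ^ 'n \<Rightarrow> real) \<Rightarrow> bool" where
  "deimling_ineq WP N \<longleftrightarrow>
     (\<forall>x y. WP x y \<le> N y * Lim (at_right 0) (\<lambda>h. (N (y + h *\<^sub>R x) - N y) / h))"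

definition curve_norm_derivative ::
  "(real ^ 'n \<Rightarrow> real ^ 'n \<Rightarrow> real) \<Rightarrow> (real ^ 'n \<Rightarrow> real) \<Rightarrow> bool" where
  "curve_norm_derivative WP N \<longleftrightarrow>
     (\<forall>x :: real \<Rightarrow> real ^ 'n. (\<forall>t. x differentiable (at t)) \<longrightarrow>
        (AE t in lborel.
           ereal (N (x t)) * Limsup (at_right 0) (\<lambda>h. ereal ((N (x (t + h)) - N (x t)) / h))
           = ereal (WP (vector_derivative x (at t)) (x t))))"

definition strongly_monotone ::
  "(real ^ 'n \<Rightarrow> real ^ 'n) \<Rightarrow> (real ^ 'n \<Rightarrow> real) \<Rightarrow> bool" where
  "strongly_monotone F N \<longleftrightarrow>
     (\<exists>c > 0. \<exists>WP. weak_pairing WP \<and> wp_compatible WP N \<and> deimling_ineq WP N \<and>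
        curve_norm_derivative WP N \<and>
        (\<forall>x y. - WP (- (F x - F y)) (x - y) \<ge> c * (N (x - y))\<^sup>2))"

end

theory Submission
  imports Defs
begin

text \<open>Only compatibility and the Cauchy-Schwarz inequality of the weak pairing are needed:
  together with strong monotonicity they give \<open>c * N (x - y) \<le> N (F x - F y)\<close>.
  Since all norms on \<open>\<real>\<^sup>n\<close> are equivalent, \<open>F\<close> is then injective with closed range,
  and by invariance of domain its range is also open, hence all of \<open>\<real>\<^sup>n\<close>.\<close>

lemma is_norm_zero: "is_norm N \<Longrightarrow> N 0 = 0"
  unfolding is_norm_def by blast

lemma is_norm_uminus: "is_norm N \<Longrightarrow> N (- x) = N x"
  unfolding is_norm_def by (metis abs_minus_cancel abs_one mult_1 scaleR_minus1_left)

lemma is_norm_eq_norm_times_sgn: "is_norm N \<Longrightarrow> N x = norm x * N (sgn x)"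
  unfolding is_norm_def sgn_div_norm by (cases "x = 0") auto

lemma is_norm_convex_on:
  fixes N :: "real ^ 'n \<Rightarrow> real"
  assumes N: "is_norm N"
  shows "convex_on UNIV N"
proof (rule convex_onI[OF _ convex_UNIV])
  fix t :: real and x y :: "real ^ 'n"
  assume t: "0 < t" "t < 1"
  have "N ((1 - t) *\<^sub>R x + t *\<^sub>R y) \<le> N ((1 - t) *\<^sub>R x) + N (t *\<^sub>R y)"
    using N unfolding is_norm_def by blast
  also have "\<dots> = (1 - t) * N x + t * N y"
    using N t unfolding is_norm_def by simp
  finally show "N ((1 - t) *\<^sub>R x + t *\<^sub>R y) \<le> (1 - t) * N x + t * N y" .
qed

lemma is_norm_continuous_on: "is_norm N \<Longrightarrow> continuous_on UNIV N"
  by (rule convex_on_continuous[OF open_UNIV is_norm_convex_on])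

lemma is_norm_equivalent_norm:
  fixes N :: "real ^ 'n \<Rightarrow> real"
  assumes N: "is_norm N"
  obtains m M where "0 < m" "\<And>x. m * norm x \<le> N x" "\<And>x. N x \<le> M * norm x"
proof -
  have "sphere 0 1 \<noteq> ({} :: (real ^ 'n) set)"
    using vector_choose_size[of 1] by auto
  then obtain z w :: "real ^ 'n" where z: "z \<in> sphere 0 1"
    and bounds: "\<And>u. u \<in> sphere 0 1 \<Longrightarrow> N z \<le> N u \<and> N u \<le> N w"
    using continuous_attains_inf[OF compact_sphere _ continuous_on_subset]
      continuous_attains_sup[OF compact_sphere _ continuous_on_subset]
      is_norm_continuous_on[OF N] by (metis subset_UNIV)
  have "0 < N z"
    using N z unfolding is_norm_def by (metis less_eq_real_def mem_sphere_0 norm_zero zero_neq_one)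
  moreover have "N z * norm x \<le> N x \<and> N x \<le> N w * norm x" for x
  proof (cases "x = 0")
    case True
    then show ?thesis using is_norm_zero[OF N] by simp
  next
    case False
    then have "N z \<le> N (sgn x) \<and> N (sgn x) \<le> N w"
      using bounds by (simp add: norm_sgn)
    then show ?thesis
      using is_norm_eq_norm_times_sgn[OF N, of x] by (metis mult.commute mult_right_mono norm_ge_zero)
  qed
  ultimately show thesis using that by blast
qed

lemma weak_pairing_abs_le:
  assumes "weak_pairing WP" "wp_compatible WP N" "is_norm N"
  shows "\<bar>WP u v\<bar> \<le> N u * N v"
proof -
  have "\<bar>WP u v\<bar> \<le> sqrt (WP u u) * sqrt (WP v v)"
    using assms(1) unfolding weak_pairing_def by blast
  also have "\<dots> = N u * N v"
    using assms(2,3) unfolding wp_compatible_def is_norm_def by simp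
  finally show ?thesis .
qed

lemma strongly_monotone_expanding:
  assumes N: "is_norm N" and F: "strongly_monotone F N"
  obtains c where "0 < c" "\<And>x y. c * N (x - y) \<le> N (F x - F y)"
proof -
  obtain c WP where c: "0 < c" and WP: "weak_pairing WP" "wp_compatible WP N"
    and mono: "\<And>x y. c * (N (x - y))\<^sup>2 \<le> - WP (- (F x - F y)) (x - y)"
    using F unfolding strongly_monotone_def by blast
  have "c * N (x - y) \<le> N (F x - F y)" for x y
  proof (cases "x = y")
    case True
    then show ?thesis using is_norm_zero[OF N] by simp
  next
    case False
    then have pos: "0 < N (x - y)"
      using N unfolding is_norm_def by (metis less_eq_real_def right_minus_eq)
    have "c * N (x - y) * N (x - y) \<le> N (- (F x - F y)) * N (x - y)"
      using mono[of x y] weak_pairing_abs_le[OF WP N, of "- (F x - F y)" "x - y"]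
      by (simp only: power2_eq_square mult.assoc)
    then show ?thesis
      using pos is_norm_uminus[OF N, of "F x - F y"] by simp
  qed
  then show thesis using that c by blast
qed

lemma strongly_monotone_dist_expanding:
  fixes F :: "real ^ 'n \<Rightarrow> real ^ 'n"
  assumes N: "is_norm N" and F: "strongly_monotone F N"
  obtains k where "0 < k" "\<And>x y. k * dist x y \<le> dist (F x) (F y)"
proof -
  obtain c where c: "0 < c" and exp: "\<And>x y. c * N (x - y) \<le> N (F x - F y)"
    using strongly_monotone_expanding[OF N F] by blast
  obtain m M where m: "0 < m" and lower: "\<And>x. m * norm x \<le> N x"
    and upper: "\<And>x. N x \<le> M * norm x"
    using is_norm_equivalent_norm[OF N] by blast
  have M: "0 < M"
    using lower[of "axis undefined 1"] upper[of "axis undefined 1"] m by simp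
  have "c * m / M * dist x y \<le> dist (F x) (F y)" for x y
  proof -
    have "c * m * norm (x - y) \<le> M * norm (F x - F y)"
      using lower[of "x - y"] upper[of "F x - F y"] exp[of x y] c
      by (smt (verit) mult.assoc mult_left_mono)
    then show ?thesis
      using M by (simp add: dist_norm field_simps)
  qed
  moreover have "0 < c * m / M"
    using c m M by simp
  ultimately show thesis using that by blast
qed

lemma expanding_imp_inj:
  fixes f :: "'a::metric_space \<Rightarrow> 'b::metric_space"
  assumes "0 < k" "\<And>x y. k * dist x y \<le> dist (f x) (f y)"
  shows "inj f"
  by (rule injI) (metis assms mult_le_0_iff not_le zero_less_dist_iff dist_self)

lemma expanding_imp_closed_range:
  fixes f :: "'a::complete_space \<Rightarrow> 'b::metric_space"
  assumes f: "continuous_on UNIV f" and k: "0 < k"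
    and exp: "\<And>x y. k * dist x y \<le> dist (f x) (f y)"
  shows "closed (range f)"
  unfolding closed_sequential_limits
proof (intro allI impI, elim conjE)
  fix y l
  assume "\<forall>n. y n \<in> range f" and lim: "y \<longlonglongrightarrow> l"
  then obtain x where y: "y = f \<circ> x"
    by (metis comp_apply image_iff ext)
  have "Cauchy x"
  proof (rule metric_CauchyI)
    fix e :: real
    assume "0 < e"
    then obtain M where M: "\<And>p q. M \<le> p \<Longrightarrow> M \<le> q \<Longrightarrow> dist (y p) (y q) < k * e"
      using metric_CauchyD[OF LIMSEQ_imp_Cauchy[OF lim]] k by (meson mult_pos_pos)
    have "dist (x p) (x q) < e" if "M \<le> p" "M \<le> q" for p q
      using M[OF that] exp[of "x p" "x q"] k y
      by (metis comp_apply le_less_trans mult_less_cancel_left_pos)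
    then show "\<exists>M. \<forall>p\<ge>M. \<forall>q\<ge>M. dist (x p) (x q) < e" by blast
  qed
  then obtain a where "x \<longlonglongrightarrow> a"
    using Cauchy_convergent_iff convergent_def by blast
  then have "y \<longlonglongrightarrow> f a"
    using continuous_on_tendsto_compose[OF f] y by (simp add: o_def)
  then show "l \<in> range f"
    using lim LIMSEQ_unique by blast
qed

lemma continuous_expanding_imp_bij:
  fixes f :: "'a \<Rightarrow> 'a::euclidean_space"
  assumes f: "continuous_on UNIV f" and k: "0 < k"
    and exp: "\<And>x y. k * dist x y \<le> dist (f x) (f y)"
  shows "bij f"
proof (rule bijI)
  show "inj f"
    using expanding_imp_inj k exp by blast
  then have "open (range f)"
    using invariance_of_domain[OF f open_UNIV] by simp
  moreover have "closed (range f)"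
    using expanding_imp_closed_range[OF f k exp] .
  ultimately show "surj f"
    using clopen[of "range f"] by auto
qed

theorem lemma24:
  fixes N :: "real ^ 'n \<Rightarrow> real" and F :: "real ^ 'n \<Rightarrow> real ^ 'n"
  assumes "is_norm N"
    and "continuous_on UNIV F"
    and "strongly_monotone F N"
  shows "\<exists>x0. {x. F x = 0} = {x0}"
proof -
  obtain k where "0 < k" "\<And>x y. k * dist x y \<le> dist (F x) (F y)"
    using strongly_monotone_dist_expanding[OF assms(1,3)] by blast
  then have "bij F"
    using continuous_expanding_imp_bij[OF assms(2)] by blast
  then have "{x. F x = 0} = {inv F 0}"
    using bij_inv_eq_iff by fastforce
  then show ?thesis by blast
qed

end
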